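(* Let $\mathcal B$ be a BMC with $\mathbf c^*_q<\infty$ for all $q\in\mathcal T$, and consider the Q-learning process with learning rates $\lambda_i\in[0,1]$, a fixed selection distribution $(p_q)_{q\in\mathcal T}$, and initial value $Q_0=\kappa\mathbf c^*$ for a scalar $\kappa\in[0,1]$. Then for all $i\in\mathbb N$, $\mathbf c^*\ge T(\mathbb E Q_i)\ge \mathbb E Q_{i+1}\ge\mathbb E Q_i$.
   Context: A branching Markov chain (BMC) is $\mathcal B=(\mathcal T,p,c)$ with $\mathcal T$ a finite set of types, $p(q)$ for each $q\in\mathcal T$ a probability distribution with finite support over finite lists $\mathcal T^*$ of types (the offspring distribution), and $c:\mathcal T\to\mathbb R_{>0}$ a strictly positive cost. (It is a BMDP with one action per type.) For a list $\alpha$, $|\alpha|$ is its length and $\alpha_i$ its $i$-th element. Its process: a list of entities; repeatedly some entity of type $q$ is replaced by a list $\beta$ drawn from $p(q)$, incurring cost $c(q)$, until the list is empty. $\mathbf c^*_q\in[0,\infty]$ denotes the expected total cost until extinction starting from the single entity $q$; equivalently $\mathbf c^*$ is the least fixed point in $[0,\infty]^{\mathcal T}$ of $F(\mathbf x)_q=c(q)+\sum_\alpha p(q)(\alpha)\sum_{i=1}^{|\alpha|}\mathbf x_{\alpha_i}$. Q-values for a BMC are vectors $Q\in\mathbb R_{\ge0}^{\mathcal T}$. The target operator is $T(Q)(q)=c(q)+\sum_{\alpha\in\mathcal T^*}p(q)(\alpha)\sum_{j=1}^{|\alpha|}Q(\alpha_j)$ (an affine map $T(Q)=BQ+\mathbf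 c$ with $B$ a nonnegative matrix). Q-learning process: given deterministic learning rates $\lambda_i\in[0,1]$, a probability distribution $(p_q)_{q\in\mathcal T}$ and an initial vector $Q_0\ge\mathbf 0$, at each step $i=0,1,2,\dots$ a type $q_i$ is selected with probability $p_{q_i}$ independently of all previous randomness, then a list $\beta^i$ is drawn from $p(q_i)$ independently, and $Q_{i+1}(q_i)=(1-\lambda_i)Q_i(q_i)+\lambda_i\big(c(q_i)+\sum_{j=1}^{|\beta^i|}Q_i(\beta^i_j)\big)$, while $Q_{i+1}(q)=Q_i(q)$ for $q\ne q_i$. $\mathbb E Q_i$ is the componentwise expectation; inequalities between vectors are componentwise. *)

theory Defs
  imports "HOL-Probability.Probability"
begin

text \<open>A BMC over a finite type of types 'q: offspring distribution p :: 'q => 'q list pmf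
  (finite support assumed in the theorem), cost c :: 'q => real (positive, assumed).\<close>

definition bmc_F :: "('q \<Rightarrow> 'q list pmf) \<Rightarrow> ('q \<Rightarrow> real) \<Rightarrow> ('q \<Rightarrow> ennreal) \<Rightarrow> ('q \<Rightarrow> ennreal)" where
  "bmc_F p c x = (\<lambda>q. ennreal (c q) +
      (\<Sum>\<alpha>\<in>set_pmf (p q). ennreal (pmf (p q) \<alpha>) * (\<Sum>i<length \<alpha>. x (\<alpha> ! i))))"

text \<open>Expected total cost until extinction: least fixed point of F.\<close>
definition cstar :: "('q \<Rightarrow> 'q list pmf) \<Rightarrow> ('q \<Rightarrow> real) \<Rightarrow> 'q \<Rightarrow> ennreal" where
  "cstar p c = lfp (bmc_F p c)"

definition target_op :: "('q \<Rightarrow> 'q list pmf) \<Rightarrow> ('q \<Rightarrow> real) \<Rightarrow> ('q \<Rightarrow> real) \<Rightarrow> ('q \<Rightarrow> real)" where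
  "target_op p c Q = (\<lambda>q. c q +
      (\<Sum>\<alpha>\<in>set_pmf (p q). pmf (p q) \<alpha> * (\<Sum>j<length \<alpha>. Q (\<alpha> ! j))))"

definition q_update :: "('q \<Rightarrow> real) \<Rightarrow> (nat \<Rightarrow> real) \<Rightarrow> nat \<Rightarrow> ('q \<Rightarrow> real) \<Rightarrow> 'q \<Rightarrow> 'q list \<Rightarrow> ('q \<Rightarrow> real)" where
  "q_update c lr i Q q \<beta> =
     Q(q := (1 - lr i) * Q q + lr i * (c q + (\<Sum>j<length \<beta>. Q (\<beta> ! j))))"

primrec qlearn_dist :: "('q \<Rightarrow> 'q list pmf) \<Rightarrow> ('q \<Rightarrow> real) \<Rightarrow> (nat \<Rightarrow> real) \<Rightarrow> 'q pmf
    \<Rightarrow> ('q \<Rightarrow> real) \<Rightarrow> nat \<Rightarrow> ('q \<Rightarrow> real) pmf" where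
  "qlearn_dist p c lr sel Q0 0 = return_pmf Q0"
| "qlearn_dist p c lr sel Q0 (Suc i) =
     bind_pmf (qlearn_dist p c lr sel Q0 i) (\<lambda>Q.
       bind_pmf sel (\<lambda>q. map_pmf (\<lambda>\<beta>. q_update c lr i Q q \<beta>) (p q)))"

definition expQ :: "('q \<Rightarrow> 'q list pmf) \<Rightarrow> ('q \<Rightarrow> real) \<Rightarrow> (nat \<Rightarrow> real) \<Rightarrow> 'q pmf
    \<Rightarrow> ('q \<Rightarrow> real) \<Rightarrow> nat \<Rightarrow> ('q \<Rightarrow> real)" where
  "expQ p c lr sel Q0 i = (\<lambda>q. measure_pmf.expectation (qlearn_dist p c lr sel Q0 i) (\<lambda>Q. Q q))"

end

theory Submission
  imports Defs
begin

text \<open>Since T is affine and the selected type is drawn independently of the past, taking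
  expectations of one update gives, componentwise,
  E Q_{i+1} q = E Q_i q + p_q \<lambda>_i (T(E Q_i) q - E Q_i q): the new mean lies between E Q_i
  and T(E Q_i). As T is monotone and fixes c*, the invariant E Q_i \<le> T(E Q_i) and
  E Q_i \<le> c* is therefore preserved. It holds initially because
  T(\<kappa> c*) = (1 - \<kappa>) c + \<kappa> c* \<ge> \<kappa> c*.\<close>

lemma bmc_F_mono: "mono (bmc_F p c)"
  unfolding bmc_F_def
  by (intro monoI le_funI add_left_mono sum_mono mult_left_mono) (auto simp: le_fun_def)

lemma target_op_mono: "x \<le> y \<Longrightarrow> target_op p c x \<le> target_op p c y"
  unfolding target_op_def le_fun_def
  by (intro allI add_left_mono sum_mono mult_left_mono) auto

lemma target_op_scale:
  "target_op p c (\<lambda>r. \<kappa> * Q r) q = (1 - \<kappa>) * c q + \<kappa> * target_op p c Q q"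
  by (simp add: target_op_def sum_distrib_left algebra_simps)

lemma target_op_convex_sum:
  assumes "finite S" and "(\<Sum>Q\<in>S. w Q) = 1"
  shows "target_op p c (\<lambda>r. \<Sum>Q\<in>S. w Q * Q r) q = (\<Sum>Q\<in>S. w Q * target_op p c Q q)"
proof -
  have "(\<Sum>Q\<in>S. w Q * target_op p c Q q) = (\<Sum>Q\<in>S. w Q) * c q +
     (\<Sum>Q\<in>S. w Q * (\<Sum>\<alpha>\<in>set_pmf (p q). pmf (p q) \<alpha> * (\<Sum>j<length \<alpha>. Q (\<alpha> ! j))))"
    by (simp add: target_op_def distrib_left sum.distrib sum_distrib_right)
  also have "(\<Sum>Q\<in>S. w Q * (\<Sum>\<alpha>\<in>set_pmf (p q). pmf (p q) \<alpha> * (\<Sum>j<length \<alpha>. Q (\<alpha> ! j))))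
     = (\<Sum>\<alpha>\<in>set_pmf (p q). pmf (p q) \<alpha> * (\<Sum>j<length \<alpha>. \<Sum>Q\<in>S. w Q * Q (\<alpha> ! j)))"
    by (simp add: sum_distrib_left sum.swap[of _ S] mult.left_commute)
  finally show ?thesis by (simp add: assms target_op_def)
qed

lemma target_op_cstar:
  assumes c_nonneg: "\<And>q. 0 \<le> c q" and cstar_fin: "\<And>q. cstar p c q < \<infinity>"
  shows "target_op p c (\<lambda>q. enn2real (cstar p c q)) = (\<lambda>q. enn2real (cstar p c q))"
proof
  fix q
  define C where "C = (\<lambda>q. enn2real (cstar p c q))"
  have C_nonneg: "\<And>r. 0 \<le> C r" by (simp add: C_def)
  have cstar_C: "\<And>r. cstar p c r = ennreal (C r)"
    using cstar_fin by (simp add: C_def ennreal_enn2real_if less_top[symmetric])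
  have TC_nonneg: "0 \<le> target_op p c C q"
    unfolding target_op_def using c_nonneg[of q]
    by (intro add_nonneg_nonneg sum_nonneg mult_nonneg_nonneg) (auto simp: C_nonneg)
  have "ennreal (C q) = bmc_F p c (cstar p c) q"
    unfolding cstar_C[symmetric] cstar_def by (subst lfp_unfold[OF bmc_F_mono]) simp
  also have "\<dots> = ennreal (c q) + (\<Sum>\<alpha>\<in>set_pmf (p q).
      ennreal (pmf (p q) \<alpha> * (\<Sum>i<length \<alpha>. C (\<alpha> ! i))))"
    unfolding bmc_F_def cstar_C
    by (intro arg_cong2[where f = "(+)"] sum.cong refl, subst sum_ennreal, simp add: C_nonneg,
        subst ennreal_mult) (auto intro: sum_nonneg simp: C_nonneg)
  also have "\<dots> = ennreal (target_op p c C q)"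
    unfolding target_op_def using c_nonneg[of q]
    by (simp add: C_nonneg sum_nonneg)
  finally show "target_op p c C q = C q"
    using C_nonneg TC_nonneg by simp
qed

lemma finite_set_pmf_qlearn_dist:
  fixes p :: "'q::finite \<Rightarrow> 'q list pmf"
  assumes "\<And>q. finite (set_pmf (p q))"
  shows "finite (set_pmf (qlearn_dist p c lr sel Q0 i))"
  by (induction i) (auto simp: assms)

lemma expectation_q_update_fixed_type:
  assumes "finite (set_pmf (p s))"
  shows "measure_pmf.expectation (map_pmf (q_update c lr i Q s) (p s)) (\<lambda>Q'. Q' q)
      = (if s = q then Q q + lr i * (target_op p c Q q - Q q) else Q q)"
proof -
  have mass: "(\<Sum>\<alpha>\<in>set_pmf (p s). pmf (p s) \<alpha>) = 1"
    using assms by (rule sum_pmf_eq_1) simp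
  have "measure_pmf.expectation (map_pmf (q_update c lr i Q s) (p s)) (\<lambda>Q'. Q' q)
     = (\<Sum>\<alpha>\<in>set_pmf (p s). pmf (p s) \<alpha> * q_update c lr i Q s \<alpha> q)"
    using assms by (subst integral_map_pmf, subst integral_measure_pmf) auto
  also have "\<dots> = (if s = q then Q q + lr i * (target_op p c Q q - Q q) else Q q)"
  proof (cases "s = q")
    case True
    have "(\<Sum>\<alpha>\<in>set_pmf (p q). pmf (p q) \<alpha> * q_update c lr i Q q \<alpha> q)
        = (\<Sum>\<alpha>\<in>set_pmf (p q). pmf (p q) \<alpha> * ((1 - lr i) * Q q + lr i * c q)
            + lr i * (pmf (p q) \<alpha> * (\<Sum>j<length \<alpha>. Q (\<alpha> ! j))))"
      by (intro sum.cong refl) (simp add: q_update_def algebra_simps)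
    also have "\<dots> = (\<Sum>\<alpha>\<in>set_pmf (p q). pmf (p q) \<alpha>) * ((1 - lr i) * Q q + lr i * c q)
          + lr i * (\<Sum>\<alpha>\<in>set_pmf (p q). pmf (p q) \<alpha> * (\<Sum>j<length \<alpha>. Q (\<alpha> ! j)))"
      by (simp add: sum.distrib sum_distrib_left sum_distrib_right)
    finally show ?thesis using True mass by (simp add: target_op_def algebra_simps)
  next
    case False
    then show ?thesis by (simp add: q_update_def flip: sum_distrib_right) (simp add: mass)
  qed
  finally show ?thesis .
qed

lemma expectation_q_update:
  fixes p :: "'q::finite \<Rightarrow> 'q list pmf"
  assumes fin: "\<And>q. finite (set_pmf (p q))"
  shows "measure_pmf.expectation (bind_pmf sel (\<lambda>s. map_pmf (q_update c lr i Q s) (p s))) (\<lambda>Q'. Q' q)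
     = Q q + pmf sel q * lr i * (target_op p c Q q - Q q)"
proof -
  have "measure_pmf.expectation (bind_pmf sel (\<lambda>s. map_pmf (q_update c lr i Q s) (p s))) (\<lambda>Q'. Q' q)
     = (\<Sum>s\<in>UNIV. pmf sel s *\<^sub>R
         measure_pmf.expectation (map_pmf (q_update c lr i Q s) (p s)) (\<lambda>Q'. Q' q))"
    by (rule pmf_expectation_bind) (auto simp: fin)
  also have "\<dots> = (\<Sum>s\<in>UNIV. pmf sel s * Q q
      + (if s = q then pmf sel q * lr i * (target_op p c Q q - Q q) else 0))"
    by (intro sum.cong refl, subst expectation_q_update_fixed_type[OF fin]) (simp add: algebra_simps)
  also have "\<dots> = (\<Sum>s\<in>UNIV. pmf sel s) * Q q + pmf sel q * lr i * (target_op p c Q q - Q q)"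
    by (simp add: sum.distrib sum_distrib_right)
  finally show ?thesis
    by (simp add: sum_pmf_eq_1)
qed

lemma expQ_Suc:
  fixes p :: "'q::finite \<Rightarrow> 'q list pmf"
  assumes fin: "\<And>q. finite (set_pmf (p q))"
  shows "expQ p c lr sel Q0 (Suc i) q = expQ p c lr sel Q0 i q
     + pmf sel q * lr i * (target_op p c (expQ p c lr sel Q0 i) q - expQ p c lr sel Q0 i q)"
proof -
  define D where "D = qlearn_dist p c lr sel Q0 i"
  define S where "S = set_pmf D"
  have S: "finite S" unfolding S_def D_def by (rule finite_set_pmf_qlearn_dist[OF fin])
  have mass: "(\<Sum>Q\<in>S. pmf D Q) = 1" using S unfolding S_def by (intro sum_pmf_eq_1) auto
  have E: "expQ p c lr sel Q0 i = (\<lambda>r. \<Sum>Q\<in>S. pmf D Q * Q r)"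
    unfolding expQ_def D_def[symmetric]
    by (rule ext, subst integral_measure_pmf[OF S]) (auto simp: S_def)
  have "expQ p c lr sel Q0 (Suc i) q = (\<Sum>Q\<in>S. pmf D Q *
      measure_pmf.expectation (bind_pmf sel (\<lambda>s. map_pmf (q_update c lr i Q s) (p s))) (\<lambda>Q'. Q' q))"
    unfolding expQ_def qlearn_dist.simps D_def[symmetric]
    by (subst pmf_expectation_bind[where A = S]) (auto simp: S[unfolded S_def] S_def fin)
  also have "\<dots> = (\<Sum>Q\<in>S. pmf D Q * (Q q + pmf sel q * lr i * (target_op p c Q q - Q q)))"
    by (simp add: expectation_q_update[OF fin])
  also have "\<dots> = (\<Sum>Q\<in>S. pmf D Q * Q q) + pmf sel q * lr i *
      ((\<Sum>Q\<in>S. pmf D Q * target_op p c Q q) - (\<Sum>Q\<in>S. pmf D Q * Q q))"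
    by (simp add: algebra_simps sum.distrib sum_distrib_left sum_subtractf)
  finally show ?thesis
    unfolding E target_op_convex_sum[OF S mass] .
qed

lemma expQ_Suc_between:
  fixes p :: "'q::finite \<Rightarrow> 'q list pmf"
  assumes fin: "\<And>q. finite (set_pmf (p q))" and lr: "0 \<le> lr i" "lr i \<le> 1"
    and sub: "expQ p c lr sel Q0 i \<le> target_op p c (expQ p c lr sel Q0 i)"
  shows "expQ p c lr sel Q0 i \<le> expQ p c lr sel Q0 (Suc i)"
    and "expQ p c lr sel Q0 (Suc i) \<le> target_op p c (expQ p c lr sel Q0 i)"
proof -
  define w where "w = (\<lambda>q. pmf sel q * lr i)"
  have w: "0 \<le> w q" "w q \<le> 1" for q
    using lr pmf_le_1[of sel q] by (auto simp: w_def intro: mult_le_one)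
  have step: "expQ p c lr sel Q0 (Suc i) q = expQ p c lr sel Q0 i q
      + w q * (target_op p c (expQ p c lr sel Q0 i) q - expQ p c lr sel Q0 i q)" for q
    by (simp add: expQ_Suc[OF fin] w_def)
  have gap: "0 \<le> target_op p c (expQ p c lr sel Q0 i) q - expQ p c lr sel Q0 i q" for q
    using sub by (simp add: le_fun_def)
  show "expQ p c lr sel Q0 i \<le> expQ p c lr sel Q0 (Suc i)"
    using w gap by (simp add: le_fun_def step)
  show "expQ p c lr sel Q0 (Suc i) \<le> target_op p c (expQ p c lr sel Q0 i)"
    unfolding le_fun_def step
    using mult_left_le_one_le[OF gap w(1) w(2)] by (simp add: algebra_simps)
qed

lemma expQ_below_fixpoint:
  fixes p :: "'q::finite \<Rightarrow> 'q list pmf"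
  assumes fin: "\<And>q. finite (set_pmf (p q))" and lr: "\<And>i. 0 \<le> lr i \<and> lr i \<le> 1"
    and fix_C: "target_op p c C = C"
    and Q0_sub: "Q0 \<le> target_op p c Q0" and Q0_le: "Q0 \<le> C"
  shows "expQ p c lr sel Q0 i \<le> target_op p c (expQ p c lr sel Q0 i)
       \<and> expQ p c lr sel Q0 i \<le> C"
proof (induction i)
  case 0
  have "expQ p c lr sel Q0 0 = Q0" by (simp add: expQ_def)
  with Q0_sub Q0_le show ?case by simp
next
  case (Suc i)
  let ?E = "expQ p c lr sel Q0"
  have lr_i: "0 \<le> lr i" "lr i \<le> 1" using lr by auto
  note up = expQ_Suc_between(1)[where p = p, OF fin lr_i conjunct1[OF Suc.IH]]
  note down = expQ_Suc_between(2)[where p = p, OF fin lr_i conjunct1[OF Suc.IH]]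
  have "target_op p c (?E i) \<le> C"
    using target_op_mono[OF conjunct2[OF Suc.IH], where p = p and c = c] fix_C by simp
  with down have le_C: "?E (Suc i) \<le> C" by (rule order_trans)
  have "?E (Suc i) \<le> target_op p c (?E i)" by (fact down)
  also have "\<dots> \<le> target_op p c (?E (Suc i))" by (rule target_op_mono[OF up])
  finally show ?case using le_C by simp
qed

theorem lemma2:
  fixes p :: "'q::finite \<Rightarrow> 'q list pmf" and c :: "'q \<Rightarrow> real"
    and lr :: "nat \<Rightarrow> real" and sel :: "'q pmf" and \<kappa> :: real
  assumes fin_supp: "\<And>q. finite (set_pmf (p q))"
    and c_pos: "\<And>q. c q > 0"
    and cstar_fin: "\<And>q. cstar p c q < \<infinity>"
    and lr_range: "\<And>i. 0 \<le> lr i \<and> lr i \<le> 1"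
    and \<kappa>_range: "0 \<le> \<kappa>" "\<kappa> \<le> 1"
  defines "Q0 \<equiv> (\<lambda>q. \<kappa> * enn2real (cstar p c q))"
  shows "(\<lambda>q. enn2real (cstar p c q)) \<ge> target_op p c (expQ p c lr sel Q0 i)
       \<and> target_op p c (expQ p c lr sel Q0 i) \<ge> expQ p c lr sel Q0 (Suc i)
       \<and> expQ p c lr sel Q0 (Suc i) \<ge> expQ p c lr sel Q0 i"
proof -
  define C where "C = (\<lambda>q. enn2real (cstar p c q))"
  define E where "E = expQ p c lr sel Q0"
  have c_nonneg: "\<And>q. 0 \<le> c q" using c_pos less_imp_le by blast
  have fix_C: "target_op p c C = C"
    unfolding C_def by (rule target_op_cstar[OF c_nonneg cstar_fin])
  have "target_op p c Q0 q = (1 - \<kappa>) * c q + \<kappa> * C q" for q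
    using fix_C unfolding Q0_def C_def by (simp add: target_op_scale fun_eq_iff)
  then have Q0_sub: "Q0 \<le> target_op p c Q0"
    using \<kappa>_range c_nonneg by (simp add: le_fun_def Q0_def C_def)
  have Q0_le: "Q0 \<le> C"
    using \<kappa>_range by (simp add: le_fun_def Q0_def C_def mult_left_le_one_le)
  have lr_i: "0 \<le> lr i" "lr i \<le> 1" using lr_range by auto
  note inv = expQ_below_fixpoint[where lr = lr and sel = sel and i = i,
      OF fin_supp lr_range fix_C Q0_sub Q0_le]
  have "target_op p c (E i) \<le> C"
    using target_op_mono[OF conjunct2[OF inv], where p = p and c = c] fix_C by (simp add: E_def)
  moreover note expQ_Suc_between[where p = p, OF fin_supp lr_i conjunct1[OF inv]]
  ultimately show ?thesis
    unfolding C_def E_def by simp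
qed

end
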